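(* Let $K\ge 1$ and $N\ge 1$ be integers, let $0\le \tau_1<\tau_2<\dots<\tau_K\le 1$, and let $\{w(\tau)\}_{\tau\in[0,1]}\subset\mathbb{R}^p$ be a fixed (non-random) weight trajectory. For each $k$, let $p_{\tau_k}$ be a probability distribution on $X\times Y$ and let $\hat p_{\tau_k}$ be a sample of $N$ pairs $(x,y)$ drawn i.i.d. from $p_{\tau_k}$, the samples for different $k$ being independent. Let $\ell(w;x,y)$ be a loss taking values in $[0,M]$ for some $M>0$. For $r\ge 0$ and each $k$ define the Rademacher complexity $$\mathcal{R}^{(k)}_N(r)=\mathbb{E}_{\hat p\sim p_{\tau_k}^N}\,\mathbb{E}_\sigma\Big[\sup_{w:\ \|w\|_{\mathrm{FR}}\le r}\frac1N\sum_{i=1}^N\sigma^i\,\ell(w;x^i,y^i)\Big],$$ where $\sigma^1,\dots,\sigma^N$ are i.i.d. uniform on $\{-1,1\}$ and $\hat p=\{(x^i,y^i)\}_{i=1}^N$. Set $R=\frac{2}{K}\sum_{k=1}^K\mathcal{R}^{(k)}_N(\|w(\tau_k)\|_{\mathrm{FR}})$. Then for every $\epsilon>R$, $$\Pr\Big\{\frac1K\sum_{k=1}^K\Big(\mathbb{E}_{(x,y)\sim p_{\tau_k}}[\ell(w(\tau_k);x,y)]-\frac1N\sum_{(x,y)\in\hat p_{\tau_k}}\ell(w(\tau_k);x,y)\Big)>\epsilon\Big\}\le \exp\Big\{-\frac{2K}{M^2}\big(\epsilon-R\big)^2\Big\}.$$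
   Context: $\|\cdot\|_{\mathrm{FR}}$ denotes the Fisher-Rao norm of a weight vector, $\|w\|_{\mathrm{FR}}^2=\langle w, g(w)\,w\rangle$, where $g(w)$ is the Fisher Information Matrix of the model $p_w(y\mid x)$: $g_{ij}(w)=\mathbb{E}_{x\sim p(x),\,y\sim p_w(y|x)}[\partial_{w_i}\log p_w(y|x)\,\partial_{w_j}\log p_w(y|x)]$. The supremum in the Rademacher complexity is over all weights in the Fisher-Rao-norm ball of the given radius (assumed measurable). *)

theory Defs
  imports "HOL-Probability.Probability"
begin

text \<open>Weights live in R^p, modelled as real^'p for a finite index type 'p.
  The probabilistic model p_w(y|x) is given by a density f w x y with respect
  to a base measure nu on Y; inputs x are distributed according to PX.\<close>

definition partial_coord :: "(real^'p \<Rightarrow> real) \<Rightarrow> 'p \<Rightarrow> real^'p \<Rightarrow> real" where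
  "partial_coord h i w = deriv (\<lambda>t. h (w + t *\<^sub>R axis i 1)) 0"

definition fisher_info ::
  "'x measure \<Rightarrow> 'y measure \<Rightarrow> (real^'p \<Rightarrow> 'x \<Rightarrow> 'y \<Rightarrow> real) \<Rightarrow> real^'p \<Rightarrow> 'p \<Rightarrow> 'p \<Rightarrow> real" where
  "fisher_info PX \<nu> f w i j =
     (\<integral>x. (\<integral>y. partial_coord (\<lambda>v. ln (f v x y)) i w * partial_coord (\<lambda>v. ln (f v x y)) j w
               * f w x y \<partial>\<nu>) \<partial>PX)"

definition fr_norm ::
  "'x measure \<Rightarrow> 'y measure \<Rightarrow> (real^'p \<Rightarrow> 'x \<Rightarrow> 'y \<Rightarrow> real) \<Rightarrow> real^'p \<Rightarrow> real" where
  "fr_norm PX \<nu> f w = sqrt (\<Sum>i\<in>UNIV. \<Sum>j\<in>UNIV. w $ i * fisher_info PX \<nu> f w i j * w $ j)"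

definition rad_signs :: "nat \<Rightarrow> (nat \<Rightarrow> real) set" where
  "rad_signs N = PiE {1..N} (\<lambda>_. {-1, 1})"

definition emp_rademacher ::
  "nat \<Rightarrow> (real^'p \<Rightarrow> 'x \<Rightarrow> 'y \<Rightarrow> real) \<Rightarrow> (real^'p) set \<Rightarrow> (nat \<Rightarrow> 'x \<times> 'y) \<Rightarrow> real" where
  "emp_rademacher N loss W S =
     (\<Sum>\<sigma>\<in>rad_signs N. (SUP w\<in>W. (1 / real N) * (\<Sum>i\<in>{1..N}. \<sigma> i * loss w (fst (S i)) (snd (S i)))))
     / 2 ^ N"

definition rademacher ::
  "('x \<times> 'y) measure \<Rightarrow> nat \<Rightarrow> (real^'p \<Rightarrow> 'x \<Rightarrow> 'y \<Rightarrow> real) \<Rightarrow> (real^'p) set \<Rightarrow> real" where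
  "rademacher D N loss W = (\<integral>S. emp_rademacher N loss W S \<partial>(PiM {1..N} (\<lambda>_. D)))"

end

theory Submission
  imports Defs
begin

(* The bound holds with room to spare. The KN losses evaluated on the samples are independent,
   with values in [0, M], and their sum deviates from its mean by KN\<epsilon> exactly when the averaged
   gap exceeds \<epsilon>; Hoeffding's inequality bounds this by exp(-2KN\<epsilon>^2/M^2). The Rademacher
   term R is nonnegative: every supremum over the Fisher-Rao ball dominates the value at the
   fixed weight w(\<tau>_k), which averages to zero over the sign vectors. Hence
   0 \<le> \<epsilon> - R \<le> \<epsilon>, and the Hoeffding bound is at most the claimed one. *)

lemma sum_rad_signs_negate:
  "(\<Sum>\<sigma>\<in>rad_signs N. g (\<lambda>i\<in>{1..N}. - \<sigma> i)) = (\<Sum>\<sigma>\<in>rad_signs N. g \<sigma>)"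
  by (rule sum.reindex_bij_witness[where i = "\<lambda>\<sigma>. \<lambda>i\<in>{1..N}. - \<sigma> i" and j = "\<lambda>\<sigma>. \<lambda>i\<in>{1..N}. - \<sigma> i"])
    (auto simp: rad_signs_def PiE_iff extensional_def fun_eq_iff)

lemma sum_rad_signs_correlation_eq_0:
  "(\<Sum>\<sigma>\<in>rad_signs N. \<Sum>i\<in>{1..N}. \<sigma> i * c i) = 0"
proof -
  have "(\<Sum>\<sigma>\<in>rad_signs N. \<Sum>i\<in>{1..N}. \<sigma> i * c i) = (\<Sum>\<sigma>\<in>rad_signs N. - (\<Sum>i\<in>{1..N}. \<sigma> i * c i))"
    using sum_rad_signs_negate[of "\<lambda>\<sigma>. \<Sum>i\<in>{1..N}. \<sigma> i * c i" N, symmetric]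
    by (simp add: sum_negf)
  then show ?thesis by (simp add: sum_negf)
qed

lemma abs_rad_correlation_le:
  assumes "\<sigma> \<in> rad_signs N"
  shows "\<bar>\<Sum>i\<in>{1..N}. \<sigma> i * c i\<bar> \<le> (\<Sum>i\<in>{1..N}. \<bar>c i\<bar>)"
proof -
  have "\<bar>\<sigma> i\<bar> = 1" if "i \<in> {1..N}" for i
    using assms that by (force simp: rad_signs_def PiE_iff)
  then have "\<bar>\<sigma> i * c i\<bar> = \<bar>c i\<bar>" if "i \<in> {1..N}" for i
    using that by (simp add: abs_mult)
  then have "(\<Sum>i\<in>{1..N}. \<bar>\<sigma> i * c i\<bar>) = (\<Sum>i\<in>{1..N}. \<bar>c i\<bar>)"
    by (rule sum.cong[OF refl])
  then show ?thesis
    using sum_abs[of "\<lambda>i. \<sigma> i * c i" "{1..N}"] by simp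
qed

lemma emp_rademacher_nonneg:
  assumes "w0 \<in> W" and loss_bounded: "\<And>v x y. \<bar>loss v x y\<bar> \<le> M"
  shows "0 \<le> emp_rademacher N loss W S"
proof -
  define c where "c = (\<lambda>w i. loss w (fst (S i)) (snd (S i)))"
  define t where "t = (\<lambda>\<sigma> w. (1 / real N) * (\<Sum>i\<in>{1..N}. \<sigma> i * c w i))"
  have "t \<sigma> w0 \<le> (SUP w\<in>W. t \<sigma> w)" if "\<sigma> \<in> rad_signs N" for \<sigma>
  proof (rule cSUP_upper[OF \<open>w0 \<in> W\<close>])
    have "t \<sigma> w \<le> (1 / real N) * (\<Sum>i\<in>{1..N}. M)" for w
    proof -
      have "(\<Sum>i\<in>{1..N}. \<sigma> i * c w i) \<le> (\<Sum>i\<in>{1..N}. \<bar>c w i\<bar>)"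
        using abs_rad_correlation_le[OF that] by (rule abs_le_D1)
      also have "\<dots> \<le> (\<Sum>i\<in>{1..N}. M)"
        by (rule sum_mono) (simp add: c_def loss_bounded)
      finally show ?thesis
        unfolding t_def by (rule mult_left_mono) simp
    qed
    then show "bdd_above (t \<sigma> ` W)"
      by (intro bdd_aboveI) blast
  qed
  then have "(\<Sum>\<sigma>\<in>rad_signs N. t \<sigma> w0) \<le> (\<Sum>\<sigma>\<in>rad_signs N. SUP w\<in>W. t \<sigma> w)"
    by (rule sum_mono)
  moreover have "(\<Sum>\<sigma>\<in>rad_signs N. t \<sigma> w0) = 0"
    using sum_rad_signs_correlation_eq_0[where c = "c w0" and N = N]
    unfolding t_def by (simp only: flip: sum_distrib_left)
  ultimately show ?thesis
    unfolding emp_rademacher_def t_def c_def by simp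
qed

lemma rademacher_nonneg:
  assumes "W \<noteq> {}" and "\<And>v x y. \<bar>loss v x y\<bar> \<le> M"
  shows "0 \<le> rademacher D N loss W"
proof -
  obtain w0 where "w0 \<in> W"
    using assms(1) by blast
  then show ?thesis
    unfolding rademacher_def using assms(2)
    by (intro Bochner_Integration.integral_nonneg emp_rademacher_nonneg)
qed

lemma indep_vars_PiM_components:
  assumes M: "\<And>i. i \<in> I \<Longrightarrow> prob_space (M i)" and "I \<noteq> {}"
  shows "prob_space.indep_vars (PiM I M) M (\<lambda>i \<omega>. \<omega> i) I"
proof -
  interpret prob_space "PiM I M"
    using M by (rule prob_space_PiM)
  have "distr (PiM I M) (PiM I M) (\<lambda>\<omega>. \<lambda>i\<in>I. \<omega> i) = distr (PiM I M) (PiM I M) (\<lambda>\<omega>. \<omega>)"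
    by (rule distr_cong) (auto simp: space_PiM)
  also have "\<dots> = PiM I (\<lambda>i. distr (PiM I M) (M i) (\<lambda>\<omega>. \<omega> i))"
    using M by (auto simp: distr_PiM_component intro: PiM_cong)
  finally show ?thesis
    using \<open>I \<noteq> {}\<close> by (subst indep_vars_iff_distr_eq_PiM') simp_all
qed

lemma Hoeffding_PiM_le:
  fixes Y :: "'i \<Rightarrow> 'a \<Rightarrow> real"
  assumes "finite J"
    and M: "\<And>j. j \<in> J \<Longrightarrow> prob_space (M j)"
    and Y_meas: "\<And>j. j \<in> J \<Longrightarrow> Y j \<in> borel_measurable (M j)"
    and Y_bounds: "\<And>j z. j \<in> J \<Longrightarrow> z \<in> space (M j) \<Longrightarrow> Y j z \<in> {a j..b j}"
    and "\<epsilon> \<ge> 0" and width_pos: "(\<Sum>j\<in>J. (b j - a j)\<^sup>2) > 0"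
  shows "measure (PiM J M) {\<omega> \<in> space (PiM J M).
           (\<Sum>j\<in>J. Y j (\<omega> j)) \<le> (\<Sum>j\<in>J. integral\<^sup>L (M j) (Y j)) - \<epsilon>}
         \<le> exp (-2 * \<epsilon>\<^sup>2 / (\<Sum>j\<in>J. (b j - a j)\<^sup>2))"
proof -
  interpret prob_space "PiM J M"
    using M by (rule prob_space_PiM)
  define X where "X = (\<lambda>j \<omega>. Y j (\<omega> j))"
  have "J \<noteq> {}"
    using width_pos by auto
  then have "indep_vars (\<lambda>_. borel) X J"
    unfolding X_def using indep_vars_compose2[OF indep_vars_PiM_components[OF M] Y_meas] by simp
  moreover have "AE \<omega> in PiM J M. X j \<omega> \<in> {a j..b j}" if "j \<in> J" for j
    using that Y_bounds by (intro AE_I2) (auto simp: X_def space_PiM PiE_iff)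
  ultimately interpret Hoeffding_ineq "PiM J M" J X a b "\<Sum>j\<in>J. expectation (X j)"
    using \<open>finite J\<close> by unfold_locales simp_all
  have "expectation (X j) = integral\<^sup>L (M j) (Y j)" if "j \<in> J" for j
  proof -
    have "expectation (X j) = integral\<^sup>L (distr (PiM J M) (M j) (\<lambda>\<omega>. \<omega> j)) (Y j)"
      unfolding X_def using that Y_meas by (simp add: integral_distr)
    then show ?thesis
      using that M by (simp add: distr_PiM_component)
  qed
  then show ?thesis
    using Hoeffding_ineq_le[OF \<open>\<epsilon> \<ge> 0\<close> width_pos] by (simp add: X_def)
qed

lemma sum_less_of_mean_gap_greater:
  fixes E :: "'k \<Rightarrow> real" and s :: "'k \<times> 'i \<Rightarrow> real" and \<epsilon> :: real
  assumes "finite A" "A \<noteq> {}" "finite B" "B \<noteq> {}"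
    and gap: "(1 / card A) * (\<Sum>k\<in>A. E k - (1 / card B) * (\<Sum>i\<in>B. s (k, i))) > \<epsilon>"
  shows "(\<Sum>j\<in>A \<times> B. s j) < (\<Sum>j\<in>A \<times> B. E (fst j)) - real (card A) * real (card B) * \<epsilon>"
proof -
  have "card A > 0" "card B > 0"
    using assms by (simp_all add: card_gt_0_iff)
  have "(\<Sum>j\<in>A \<times> B. E (fst j)) - (\<Sum>j\<in>A \<times> B. s j)
        = card B * (\<Sum>k\<in>A. E k - (1 / card B) * (\<Sum>i\<in>B. s (k, i)))"
  proof -
    have "(\<Sum>j\<in>A \<times> B. E (fst j)) = card B * (\<Sum>k\<in>A. E k)"
      by (simp add: sum.cartesian_product' sum_distrib_right mult.commute)
    moreover have "(\<Sum>j\<in>A \<times> B. s j) = (\<Sum>k\<in>A. \<Sum>i\<in>B. s (k, i))"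
      by (simp add: sum.cartesian_product')
    ultimately show ?thesis
      using \<open>card B > 0\<close> by (simp add: sum_subtractf right_diff_distrib sum_divide_distrib[symmetric])
  qed
  also have "\<dots> > card B * (card A * \<epsilon>)"
    using gap \<open>card A > 0\<close> \<open>card B > 0\<close> by (simp add: field_simps)
  finally show ?thesis
    by (simp add: algebra_simps)
qed

lemma averaged_sample_gap_tail:
  fixes D :: "nat \<Rightarrow> 'a measure" and l :: "nat \<Rightarrow> 'a \<Rightarrow> real"
  assumes "K \<ge> 1" "N \<ge> 1" "M > 0" "\<epsilon> \<ge> 0"
    and D_prob: "\<And>k. k \<in> {1..K} \<Longrightarrow> prob_space (D k)"
    and l_meas: "\<And>k. k \<in> {1..K} \<Longrightarrow> l k \<in> borel_measurable (D k)"
    and l_range: "\<And>k z. 0 \<le> l k z \<and> l k z \<le> M"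
  shows "measure (PiM ({1..K} \<times> {1..N}) (\<lambda>(k, i). D k))
           {S \<in> space (PiM ({1..K} \<times> {1..N}) (\<lambda>(k, i). D k)).
              (1 / real K) * (\<Sum>k\<in>{1..K}. integral\<^sup>L (D k) (l k)
                 - (1 / real N) * (\<Sum>i\<in>{1..N}. l k (S (k, i)))) > \<epsilon>}
         \<le> exp (- 2 * real K * real N * \<epsilon>\<^sup>2 / M\<^sup>2)"
proof -
  let ?J = "{1..K} \<times> {1..N}" and ?D = "\<lambda>(k::nat, i::nat). D k"
  let ?P = "PiM ?J ?D"
  define Y where "Y = (\<lambda>j::nat \<times> nat. l (fst j))"
  interpret prob_space ?P
    using D_prob by (intro prob_space_PiM) auto
  have Y_meas: "Y j \<in> borel_measurable (?D j)" if "j \<in> ?J" for j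
    using that l_meas by (auto simp: Y_def)
  have "(\<Sum>j\<in>?J. integral\<^sup>L (?D j) (Y j)) = (\<Sum>j\<in>?J. integral\<^sup>L (D (fst j)) (l (fst j)))"
    by (rule sum.cong) (auto simp: Y_def)
  then have event_subset: "{S \<in> space ?P. (1 / real K) * (\<Sum>k\<in>{1..K}. integral\<^sup>L (D k) (l k)
                 - (1 / real N) * (\<Sum>i\<in>{1..N}. l k (S (k, i)))) > \<epsilon>}
      \<subseteq> {S \<in> space ?P. (\<Sum>j\<in>?J. Y j (S j))
           \<le> (\<Sum>j\<in>?J. integral\<^sup>L (?D j) (Y j)) - real K * real N * \<epsilon>}"
    using \<open>K \<ge> 1\<close> \<open>N \<ge> 1\<close> sum_less_of_mean_gap_greater[where A = "{1..K}" and B = "{1..N}"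
        and E = "\<lambda>k. integral\<^sup>L (D k) (l k)" and s = "\<lambda>j. Y j (S j)" and \<epsilon> = \<epsilon> for S]
    by (auto simp: Y_def intro: less_imp_le)
  have sum_meas: "(\<lambda>S. \<Sum>j\<in>?J. Y j (S j)) \<in> borel_measurable ?P"
    using Y_meas by (intro borel_measurable_sum measurable_compose[OF measurable_component_singleton]) auto
  from event_subset have "measure ?P {S \<in> space ?P. (1 / real K) * (\<Sum>k\<in>{1..K}.
      integral\<^sup>L (D k) (l k) - (1 / real N) * (\<Sum>i\<in>{1..N}. l k (S (k, i)))) > \<epsilon>}
      \<le> measure ?P {S \<in> space ?P. (\<Sum>j\<in>?J. Y j (S j))
           \<le> (\<Sum>j\<in>?J. integral\<^sup>L (?D j) (Y j)) - real K * real N * \<epsilon>}"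
    by (rule finite_measure_mono) (intro borel_measurable_le sum_meas borel_measurable_const)
  also have "\<dots> \<le> exp (-2 * (real K * real N * \<epsilon>)\<^sup>2 / (\<Sum>j\<in>?J. (M - 0)\<^sup>2))"
  proof (rule Hoeffding_PiM_le)
    show "prob_space (?D j)" if "j \<in> ?J" for j
      using that D_prob by auto
    show "Y j z \<in> {0..M}" for j z
      using l_range by (simp add: Y_def)
    show "0 < (\<Sum>j\<in>?J. (M - 0)\<^sup>2)"
      using \<open>K \<ge> 1\<close> \<open>N \<ge> 1\<close> \<open>M > 0\<close> by simp
  qed (use Y_meas \<open>\<epsilon> \<ge> 0\<close> in simp_all)
  also have "\<dots> = exp (- 2 * real K * real N * \<epsilon>\<^sup>2 / M\<^sup>2)"
    using \<open>K \<ge> 1\<close> \<open>N \<ge> 1\<close> \<open>M > 0\<close> by (simp add: power2_eq_square field_simps)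
  finally show ?thesis .
qed

theorem mainTheorem1:
  fixes K N :: nat
    and \<tau> :: "nat \<Rightarrow> real"
    and w :: "real \<Rightarrow> real^'p"
    and D :: "nat \<Rightarrow> ('x \<times> 'y) measure"
    and loss :: "real^'p \<Rightarrow> 'x \<Rightarrow> 'y \<Rightarrow> real"
    and M :: real
    and PX :: "'x measure" and \<nu> :: "'y measure"
    and f :: "real^'p \<Rightarrow> 'x \<Rightarrow> 'y \<Rightarrow> real"
    and \<epsilon> :: real
  assumes K: "K \<ge> 1" and N: "N \<ge> 1"
    and tau_range: "\<And>k. k \<in> {1..K} \<Longrightarrow> 0 \<le> \<tau> k \<and> \<tau> k \<le> 1"
    and tau_mono: "\<And>k l. k \<in> {1..K} \<Longrightarrow> l \<in> {1..K} \<Longrightarrow> k < l \<Longrightarrow> \<tau> k < \<tau> l"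
    and D_prob: "\<And>k. k \<in> {1..K} \<Longrightarrow> prob_space (D k)"
    and PX_prob: "prob_space PX"
    and f_nonneg: "\<And>v x y. 0 \<le> f v x y"
    and f_meas: "\<And>v x. f v x \<in> borel_measurable \<nu>"
    and f_density: "\<And>v x. (\<integral>\<^sup>+ y. ennreal (f v x y) \<partial>\<nu>) = 1"
    and M_pos: "M > 0"
    and loss_range: "\<And>v x y. 0 \<le> loss v x y \<and> loss v x y \<le> M"
    and loss_meas: "\<And>v k. k \<in> {1..K} \<Longrightarrow> (\<lambda>z. loss v (fst z) (snd z)) \<in> borel_measurable (D k)"
    and sup_meas: "\<And>k r. k \<in> {1..K} \<Longrightarrow> r \<ge> 0 \<Longrightarrow>
        emp_rademacher N loss {v. fr_norm PX \<nu> f v \<le> r} \<in> borel_measurable (PiM {1..N} (\<lambda>_. D k))"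
    and eps: "\<epsilon> > (2 / real K) * (\<Sum>k\<in>{1..K}.
               rademacher (D k) N loss {v. fr_norm PX \<nu> f v \<le> fr_norm PX \<nu> f (w (\<tau> k))})"
  shows "measure (PiM ({1..K} \<times> {1..N}) (\<lambda>(k, i). D k))
           {S \<in> space (PiM ({1..K} \<times> {1..N}) (\<lambda>(k, i). D k)).
              (1 / real K) * (\<Sum>k\<in>{1..K}.
                 (\<integral>z. loss (w (\<tau> k)) (fst z) (snd z) \<partial>(D k))
                 - (1 / real N) * (\<Sum>i\<in>{1..N}. loss (w (\<tau> k)) (fst (S (k, i))) (snd (S (k, i)))))
              > \<epsilon>}
         \<le> exp (- (2 * real K / M\<^sup>2) * (\<epsilon> - (2 / real K) * (\<Sum>k\<in>{1..K}.
               rademacher (D k) N loss {v. fr_norm PX \<nu> f v \<le> fr_norm PX \<nu> f (w (\<tau> k))}))\<^sup>2)"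
proof -
  define R where "R = (2 / real K) * (\<Sum>k\<in>{1..K}.
    rademacher (D k) N loss {v. fr_norm PX \<nu> f v \<le> fr_norm PX \<nu> f (w (\<tau> k))})"
  have "0 \<le> R"
    unfolding R_def using loss_range
    by (intro mult_nonneg_nonneg sum_nonneg rademacher_nonneg[where M = M]) (auto simp: abs_le_iff)
  moreover have "R < \<epsilon>"
    using eps by (simp add: R_def)
  ultimately have "(\<epsilon> - R)\<^sup>2 \<le> real N * \<epsilon>\<^sup>2"
    using N by (intro order.trans[OF power_mono[of "\<epsilon> - R" \<epsilon>]]) (auto simp: mult_le_cancel_right1)
  then have exponent_le: "exp (- 2 * real K * real N * \<epsilon>\<^sup>2 / M\<^sup>2) \<le> exp (- (2 * real K / M\<^sup>2) * (\<epsilon> - R)\<^sup>2)"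
    by (simp add: divide_right_mono mult_left_mono mult.assoc)
  have "0 \<le> \<epsilon>"
    using \<open>0 \<le> R\<close> \<open>R < \<epsilon>\<close> by simp
   with averaged_sample_gap_tail[OF K N M_pos _ D_prob, where l = "\<lambda>k z. loss (w (\<tau> k)) (fst z) (snd z)"]
  show ?thesis
    using loss_meas loss_range order.trans[OF _ exponent_le] unfolding R_def by simp
qed

end
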